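(* A homeomorphism $f$ of a compact metric space $(X,d)$ has the L-shadowing property if and only if $f$ has the shadowing property and for every $\epsilon>0$ there is $\delta>0$ such that $d(x,y)<\delta$ implies $V^s_\epsilon(x)\cap V^u_\epsilon(y)\neq\emptyset$.
   Context: L-shadowing: for every $\varepsilon>0$ there is $\delta>0$ such that every sequence $(x_k)_{k\in\mathbb{Z}}$ with $d(f(x_k),x_{k+1})\le\delta$ for all $k$ and $d(f(x_k),x_{k+1})\to0$ as $|k|\to\infty$ admits $z$ with $d(f^k(z),x_k)\le\varepsilon$ for all $k$ and $d(f^k(z),x_k)\to0$ as $|k|\to\infty$. Shadowing: for every $\varepsilon>0$ there is $\delta>0$ such that for every sequence $(x_k)_{k\in\mathbb{Z}}$ with $d(f(x_k),x_{k+1})<\delta$ for all $k$ there is $y$ with $d(f^k(y),x_k)<\varepsilon$ for all $k\in\mathbb{Z}$. For $x\in X$, $\epsilon>0$: $W^s_\epsilon(x)=\{y: d(f^n(x),f^n(y))\le\epsilon\ \forall n\ge0\}$, $W^u_\epsilon(x)=\{y: d(f^{-n}(x),f^{-n}(y))\le\epsilon\ \forall n\ge0\}$, $W^s(x)=\{y: d(f^n(x),f^n(y))\to0 \text{ as } n\to+\infty\}$, $W^u(x)=\{y: d(f^{-n}(x),f^{-n}(y))\to0 \text{ as } n\to+\infty\}$, $V^s_\epsilon(x)=W^s(x)\cap W^s_\epsilon(x)$, $V^u_\epsilon(x)=W^u(x)\cap W^u_\epsilon(x)$. *)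

theory Defs
  imports "HOL-Analysis.Analysis"
begin

text \<open>Setting: a compact metric space X (a subset of a metric-space type with the
induced metric) and a homeomorphism f of X onto X with inverse g
(homeomorphism X X f g).\<close>

definition iter_int :: "('a \<Rightarrow> 'a) \<Rightarrow> ('a \<Rightarrow> 'a) \<Rightarrow> int \<Rightarrow> 'a \<Rightarrow> 'a" where
  "iter_int f g k = (if 0 \<le> k then (f ^^ nat k) else (g ^^ nat (- k)))"

definition shadowing :: "'a::metric_space set \<Rightarrow> ('a \<Rightarrow> 'a) \<Rightarrow> ('a \<Rightarrow> 'a) \<Rightarrow> bool" where
  "shadowing X f g \<longleftrightarrow>
    (\<forall>\<epsilon>>0. \<exists>\<delta>>0. \<forall>x::int \<Rightarrow> 'a. (\<forall>k. x k \<in> X) \<longrightarrow>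
        (\<forall>k. dist (f (x k)) (x (k+1)) < \<delta>) \<longrightarrow>
        (\<exists>y\<in>X. \<forall>k. dist (iter_int f g k y) (x k) < \<epsilon>))"

definition L_shadowing :: "'a::metric_space set \<Rightarrow> ('a \<Rightarrow> 'a) \<Rightarrow> ('a \<Rightarrow> 'a) \<Rightarrow> bool" where
  "L_shadowing X f g \<longleftrightarrow>
    (\<forall>\<epsilon>>0. \<exists>\<delta>>0. \<forall>x::int \<Rightarrow> 'a. (\<forall>k. x k \<in> X) \<longrightarrow>
        (\<forall>k. dist (f (x k)) (x (k+1)) \<le> \<delta>) \<longrightarrow>
        ((\<lambda>k. dist (f (x k)) (x (k+1))) \<longlongrightarrow> 0) at_top \<longrightarrow>
        ((\<lambda>k. dist (f (x k)) (x (k+1))) \<longlongrightarrow> 0) at_bot \<longrightarrow>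
        (\<exists>z\<in>X. (\<forall>k. dist (iter_int f g k z) (x k) \<le> \<epsilon>) \<and>
               ((\<lambda>k. dist (iter_int f g k z) (x k)) \<longlongrightarrow> 0) at_top \<and>
               ((\<lambda>k. dist (iter_int f g k z) (x k)) \<longlongrightarrow> 0) at_bot))"

definition Ws_loc :: "'a::metric_space set \<Rightarrow> ('a \<Rightarrow> 'a) \<Rightarrow> real \<Rightarrow> 'a \<Rightarrow> 'a set" where
  "Ws_loc X f e x = {y\<in>X. \<forall>n. dist ((f ^^ n) x) ((f ^^ n) y) \<le> e}"

definition Wu_loc :: "'a::metric_space set \<Rightarrow> ('a \<Rightarrow> 'a) \<Rightarrow> real \<Rightarrow> 'a \<Rightarrow> 'a set" where
  "Wu_loc X g e x = {y\<in>X. \<forall>n. dist ((g ^^ n) x) ((g ^^ n) y) \<le> e}"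

definition Ws :: "'a::metric_space set \<Rightarrow> ('a \<Rightarrow> 'a) \<Rightarrow> 'a \<Rightarrow> 'a set" where
  "Ws X f x = {y\<in>X. ((\<lambda>n. dist ((f ^^ n) x) ((f ^^ n) y)) \<longlongrightarrow> 0) sequentially}"

definition Wu :: "'a::metric_space set \<Rightarrow> ('a \<Rightarrow> 'a) \<Rightarrow> 'a \<Rightarrow> 'a set" where
  "Wu X g x = {y\<in>X. ((\<lambda>n. dist ((g ^^ n) x) ((g ^^ n) y)) \<longlongrightarrow> 0) sequentially}"

definition Vs :: "'a::metric_space set \<Rightarrow> ('a \<Rightarrow> 'a) \<Rightarrow> real \<Rightarrow> 'a \<Rightarrow> 'a set" where
  "Vs X f e x = Ws X f x \<inter> Ws_loc X f e x"

definition Vu :: "'a::metric_space set \<Rightarrow> ('a \<Rightarrow> 'a) \<Rightarrow> real \<Rightarrow> 'a \<Rightarrow> 'a set" where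
  "Vu X g e x = Wu X g x \<inter> Wu_loc X g e x"

end

theory Submission
  imports Defs
begin

text \<open>
  L-shadowing gives shadowing: L-shadow the pseudo-orbits that agree with a given one on a finite
  window and follow true orbits outside it, and pass to a cluster point of the shadowing points.
  It gives the local product structure: L-shadow the pseudo-orbit that runs along the backward
  orbit of y and jumps once, at time 0, onto the forward orbit of x.

  Conversely, shadowing and the local product structure give limit shadowing of one-sided
  pseudo-orbits: shadow ever later tails ever more precisely, and splice each new shadowing orbit
  onto the previous approximation through a point of V^s \<inter> W^u_loc.  The corrections halve
  at every step, so a cluster point of the approximations is asymptotic to the pseudo-orbit.
  Doing this for f on the forward half and for its inverse on the backward half gives two points
  near x 0, and one more use of the local product structure joins them.
\<close>

lemma tendsto_at_top_int_iff:
  "(f \<longlongrightarrow> l) at_top \<longleftrightarrow> ((\<lambda>n. f (int n)) \<longlongrightarrow> l) sequentially"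
proof
  assume "(f \<longlongrightarrow> l) at_top"
  then show "((\<lambda>n. f (int n)) \<longlongrightarrow> l) sequentially"
    by (rule filterlim_compose[OF _ filterlim_int_sequentially])
qed (rule filterlim_int_of_nat_at_topD)

lemma tendsto_at_bot_int_iff:
  "(f \<longlongrightarrow> l) at_bot \<longleftrightarrow> ((\<lambda>n. f (- int n)) \<longlongrightarrow> l) sequentially"
  by (simp add: at_bot_mirror filterlim_filtermap tendsto_at_top_int_iff[where f = "\<lambda>k. f (- k)"])

lemma compact_cluster_point_keeps_bounds:
  fixes w :: "nat \<Rightarrow> 'a::metric_space" and \<phi> :: "'i \<Rightarrow> 'a \<Rightarrow> 'b::metric_space"
  assumes "compact X" and "\<And>n. w n \<in> X" and "\<And>i. i \<in> I \<Longrightarrow> continuous_on X (\<phi> i)"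
    and "\<And>i. i \<in> I \<Longrightarrow> eventually (\<lambda>n. dist (\<phi> i (w n)) (y i) \<le> c i) sequentially"
  shows "\<exists>z\<in>X. \<forall>i\<in>I. dist (\<phi> i z) (y i) \<le> c i"
proof -
  obtain z r where "z \<in> X" and r: "strict_mono r" and lim: "(w \<circ> r) \<longlonglongrightarrow> z"
    using assms(1,2) compact_imp_seq_compact unfolding seq_compact_def by metis
  have "dist (\<phi> i z) (y i) \<le> c i" if i: "i \<in> I" for i
  proof (rule tendsto_upperbound[OF tendsto_dist[OF _ tendsto_const]])
    show "((\<lambda>n. \<phi> i ((w \<circ> r) n)) \<longlongrightarrow> \<phi> i z) sequentially"
      using continuous_on_tendsto_compose[OF assms(3)[OF i] lim \<open>z \<in> X\<close>] assms(2) by simp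
    show "eventually (\<lambda>n. c i \<ge> dist (\<phi> i ((w \<circ> r) n)) (y i)) sequentially"
      using filterlim_iff[THEN iffD1, OF filterlim_subseq[OF r], rule_format, OF assms(4)[OF i]]
      by simp
  qed simp
  with \<open>z \<in> X\<close> show ?thesis by blast
qed

lemma halving_chain_bound:
  fixes p :: "nat \<Rightarrow> nat \<Rightarrow> 'a::metric_space" and x :: "nat \<Rightarrow> 'a"
  assumes base: "\<And>m k. N m \<le> k \<Longrightarrow> dist (p m k) (x k) \<le> 2 * e m"
    and step: "\<And>m k. k \<le> N (Suc m) \<Longrightarrow> dist (p (Suc m) k) (p m k) \<le> e (Suc m)"
    and half: "\<And>m. e (Suc m) = e m / 2" and nonneg: "\<And>m. e m \<ge> 0"
    and "m \<le> m'" and "N m \<le> k"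
  shows "dist (p m' k) (x k) \<le> 3 * e m"
proof -
  have decr: "e (Suc n) \<le> e n" for n
    using half[of n] nonneg[of n] by simp
  have mono: "e (m + d) \<le> e m" for d
    by (induction d) (auto intro: order_trans[OF decr])
  have "dist (p (m + d) k) (x k) \<le> 3 * e m - e (m + d)" for d
  proof (induction d)
    case 0 then show ?case using base[OF \<open>N m \<le> k\<close>] by simp
  next
    case (Suc d)
    show ?case
    proof (cases "k \<le> N (Suc (m + d))")
      case True
      have "dist (p (Suc (m + d)) k) (x k) \<le> dist (p (Suc (m + d)) k) (p (m + d) k) + dist (p (m + d) k) (x k)"
        by (rule dist_triangle)
      with step[OF True] Suc half[of "m + d"] show ?thesis by simp
    next
      case False
      with base[of "Suc (m + d)" k] mono[of "Suc d"] show ?thesis by simp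
    qed
  qed
  from this[of "m' - m"] nonneg[of m'] \<open>m \<le> m'\<close> show ?thesis by simp
qed

lemma tendsto_dist_zero_trans:
  "((\<lambda>n. dist (a n) (b n)) \<longlongrightarrow> 0) F \<Longrightarrow> ((\<lambda>n. dist (a n) (c n)) \<longlongrightarrow> 0) F
    \<Longrightarrow> ((\<lambda>n. dist (b n) (c n)) \<longlongrightarrow> 0) F"
  by (rule tendsto_sandwich[of "\<lambda>_. 0" _ _ "\<lambda>n. dist (a n) (b n) + dist (a n) (c n)"])
     (auto intro!: always_eventually dist_triangle3 tendsto_add_zero)

lemma iter_int_of_nat [simp]: "iter_int f g (int n) = f ^^ n"
  by (simp add: iter_int_def)

lemma iter_int_minus_of_nat [simp]: "iter_int f g (- int n) = g ^^ n"
  by (cases "n = 0") (auto simp: iter_int_def)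

lemma iter_int_zero [simp]: "iter_int f g 0 = id"
  by (simp add: iter_int_def)

lemma iter_int_swap: "iter_int g f k = iter_int f g (- k)"
  by (auto simp: iter_int_def)

definition limit_pseudo_orbit :: "('a::metric_space \<Rightarrow> 'a) \<Rightarrow> real \<Rightarrow> (int \<Rightarrow> 'a) \<Rightarrow> bool" where
  "limit_pseudo_orbit f \<delta> x \<longleftrightarrow> (\<forall>k. dist (f (x k)) (x (k + 1)) \<le> \<delta>)
     \<and> ((\<lambda>k. dist (f (x k)) (x (k + 1))) \<longlongrightarrow> 0) at_top
     \<and> ((\<lambda>k. dist (f (x k)) (x (k + 1))) \<longlongrightarrow> 0) at_bot"

definition limit_shadows :: "('a::metric_space \<Rightarrow> 'a) \<Rightarrow> ('a \<Rightarrow> 'a) \<Rightarrow> real \<Rightarrow> 'a \<Rightarrow> (int \<Rightarrow> 'a) \<Rightarrow> bool" where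
  "limit_shadows f g \<epsilon> z x \<longleftrightarrow> (\<forall>k. dist (iter_int f g k z) (x k) \<le> \<epsilon>)
     \<and> ((\<lambda>k. dist (iter_int f g k z) (x k)) \<longlongrightarrow> 0) at_top
     \<and> ((\<lambda>k. dist (iter_int f g k z) (x k)) \<longlongrightarrow> 0) at_bot"

lemma L_shadowing_iff:
  "L_shadowing X f g \<longleftrightarrow> (\<forall>\<epsilon>>0. \<exists>\<delta>>0. \<forall>x. (\<forall>k. x k \<in> X) \<longrightarrow> limit_pseudo_orbit f \<delta> x \<longrightarrow>
      (\<exists>z\<in>X. limit_shadows f g \<epsilon> z x))"
  unfolding L_shadowing_def limit_pseudo_orbit_def limit_shadows_def imp_conjL ..

lemma limit_pseudo_orbit_mono:
  "limit_pseudo_orbit f \<delta> x \<Longrightarrow> \<delta> \<le> \<delta>' \<Longrightarrow> limit_pseudo_orbit f \<delta>' x"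
  unfolding limit_pseudo_orbit_def by (meson order_trans)

lemma limit_shadows_from_halves:
  assumes "\<And>n. dist ((f ^^ n) v) (x (int n)) \<le> c" and "\<And>n. dist ((g ^^ n) v) (x (- int n)) \<le> c"
    and "(\<lambda>n. dist ((f ^^ n) v) (x (int n))) \<longlonglongrightarrow> 0"
    and "(\<lambda>n. dist ((g ^^ n) v) (x (- int n))) \<longlonglongrightarrow> 0"
  shows "limit_shadows f g c v x"
  unfolding limit_shadows_def
proof (intro conjI allI)
  show "dist (iter_int f g k v) (x k) \<le> c" for k
    by (cases k rule: int_cases2) (use assms(1,2) in auto)
qed (use assms(3,4) in \<open>simp_all add: tendsto_at_top_int_iff tendsto_at_bot_int_iff\<close>)

lemma limit_shadows_glue:
  assumes zf: "\<forall>n. dist ((f ^^ n) zf) (x (int n)) \<le> \<eta>"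
    and zf_lim: "(\<lambda>n. dist ((f ^^ n) zf) (x (int n))) \<longlonglongrightarrow> 0"
    and zg: "\<forall>n. dist ((g ^^ n) zg) (x (- int n)) \<le> \<eta>"
    and zg_lim: "(\<lambda>n. dist ((g ^^ n) zg) (x (- int n))) \<longlonglongrightarrow> 0"
    and vf: "v \<in> Vs X f r zf" and vg: "v \<in> Vs X g r zg" and "\<eta> + r \<le> c"
  shows "limit_shadows f g c v x"
proof (rule limit_shadows_from_halves)
  show "dist ((f ^^ n) v) (x (int n)) \<le> c" for n
  proof -
    have "dist ((f ^^ n) zf) ((f ^^ n) v) \<le> r"
      using vf by (simp add: Vs_def Ws_loc_def)
    then show ?thesis
      using dist_triangle3[of "(f ^^ n) v" "x (int n)" "(f ^^ n) zf"] zf[rule_format, of n] \<open>\<eta> + r \<le> c\<close>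
      by linarith
  qed
  show "dist ((g ^^ n) v) (x (- int n)) \<le> c" for n
  proof -
    have "dist ((g ^^ n) zg) ((g ^^ n) v) \<le> r"
      using vg by (simp add: Vs_def Ws_loc_def)
    then show ?thesis
      using dist_triangle3[of "(g ^^ n) v" "x (- int n)" "(g ^^ n) zg"] zg[rule_format, of n] \<open>\<eta> + r \<le> c\<close>
      by linarith
  qed
  show "(\<lambda>n. dist ((f ^^ n) v) (x (int n))) \<longlonglongrightarrow> 0"
    using vf zf_lim by (auto simp: Vs_def Ws_def intro: tendsto_dist_zero_trans)
  show "(\<lambda>n. dist ((g ^^ n) v) (x (- int n))) \<longlonglongrightarrow> 0"
    using vg zg_lim by (auto simp: Vs_def Ws_def intro: tendsto_dist_zero_trans)
qed

lemma limit_shadows_jump_in_V: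
  assumes "z \<in> X" and "dist x y \<le> r"
    and s_pos: "\<And>n. s (int (Suc n)) = (f ^^ Suc n) x" and s_neg: "\<And>n. s (- int n) = (g ^^ n) y"
    and "limit_shadows f g r z s"
  shows "z \<in> Vs X f (2 * r) x \<inter> Vu X g (2 * r) y"
proof -
  from \<open>limit_shadows f g r z s\<close> have bound: "\<And>k. dist (iter_int f g k z) (s k) \<le> r"
    and top: "(\<lambda>n. dist ((f ^^ n) z) (s (int n))) \<longlonglongrightarrow> 0"
    and bot: "(\<lambda>n. dist ((g ^^ n) z) (s (- int n))) \<longlonglongrightarrow> 0"
    unfolding limit_shadows_def tendsto_at_top_int_iff tendsto_at_bot_int_iff by auto
  have "(\<lambda>n. dist ((f ^^ Suc n) z) ((f ^^ Suc n) x)) \<longlonglongrightarrow> 0"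
    using LIMSEQ_Suc[OF top] unfolding s_pos .
  then have "(\<lambda>n. dist ((f ^^ n) z) ((f ^^ n) x)) \<longlonglongrightarrow> 0"
    by (rule LIMSEQ_imp_Suc)
  moreover have "dist ((f ^^ n) z) ((f ^^ n) x) \<le> 2 * r" for n
  proof (cases n)
    case 0
    have "dist z x \<le> dist z y + dist y x" by (rule dist_triangle)
    with 0 bound[of 0] s_neg[of 0] \<open>dist x y \<le> r\<close> show ?thesis by (simp add: dist_commute)
  next
    case (Suc m)
    show ?thesis
      using bound[of "int n"] \<open>dist x y \<le> r\<close> zero_le_dist[of x y]
      unfolding Suc iter_int_of_nat s_pos by linarith
  qed
  moreover have "dist ((g ^^ n) z) ((g ^^ n) y) \<le> 2 * r" for n
    using bound[of "- int n"] \<open>dist x y \<le> r\<close> zero_le_dist[of x y]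
    unfolding iter_int_minus_of_nat s_neg by linarith
  moreover have "(\<lambda>n. dist ((g ^^ n) z) ((g ^^ n) y)) \<longlonglongrightarrow> 0"
    using bot unfolding s_neg .
  ultimately show ?thesis
    using \<open>z \<in> X\<close> by (simp add: Vs_def Vu_def Ws_def Wu_def Ws_loc_def Wu_loc_def dist_commute)
qed

\<comment> \<open>x on the window [-N, N], continued outside it by the orbits of x (-N) and x N.\<close>
definition window_extension :: "('a \<Rightarrow> 'a) \<Rightarrow> ('a \<Rightarrow> 'a) \<Rightarrow> nat \<Rightarrow> (int \<Rightarrow> 'a) \<Rightarrow> int \<Rightarrow> 'a" where
  "window_extension f g N x k =
     (let c = max (- int N) (min (int N) k) in iter_int f g (k - c) (x c))"

lemma window_extension_eq: "- int N \<le> k \<Longrightarrow> k \<le> int N \<Longrightarrow> window_extension f g N x k = x k"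
  by (simp add: window_extension_def)

definition forward_shadowing :: "'a::metric_space set \<Rightarrow> ('a \<Rightarrow> 'a) \<Rightarrow> bool" where
  "forward_shadowing X h \<longleftrightarrow>
    (\<forall>\<epsilon>>0. \<exists>\<delta>>0. \<forall>x::nat \<Rightarrow> 'a. (\<forall>k. x k \<in> X) \<longrightarrow>
        (\<forall>k. dist (h (x k)) (x (Suc k)) < \<delta>) \<longrightarrow>
        (\<exists>y\<in>X. \<forall>k. dist ((h ^^ k) y) (x k) < \<epsilon>))"

definition forward_L_shadowing :: "'a::metric_space set \<Rightarrow> ('a \<Rightarrow> 'a) \<Rightarrow> bool" where
  "forward_L_shadowing X h \<longleftrightarrow>
    (\<forall>\<epsilon>>0. \<exists>\<delta>>0. \<forall>x::nat \<Rightarrow> 'a. (\<forall>k. x k \<in> X) \<longrightarrow>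
        (\<forall>k. dist (h (x k)) (x (Suc k)) \<le> \<delta>) \<longrightarrow>
        (\<lambda>k. dist (h (x k)) (x (Suc k))) \<longlonglongrightarrow> 0 \<longrightarrow>
        (\<exists>z\<in>X. (\<forall>k. dist ((h ^^ k) z) (x k) \<le> \<epsilon>) \<and> (\<lambda>k. dist ((h ^^ k) z) (x k)) \<longlonglongrightarrow> 0))"

definition local_product_structure :: "'a::metric_space set \<Rightarrow> ('a \<Rightarrow> 'a) \<Rightarrow> ('a \<Rightarrow> 'a) \<Rightarrow> bool" where
  "local_product_structure X f g \<longleftrightarrow>
    (\<forall>\<epsilon>>0. \<exists>\<delta>>0. \<forall>x\<in>X. \<forall>y\<in>X. dist x y < \<delta> \<longrightarrow> Vs X f \<epsilon> x \<inter> Vu X g \<epsilon> y \<noteq> {})"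

lemma Vu_eq_Vs: "Vu X h \<epsilon> x = Vs X h \<epsilon> x"
  by (simp add: Vu_def Vs_def Wu_def Ws_def Wu_loc_def Ws_loc_def)

lemma local_product_structure_sym:
  assumes "local_product_structure X f g"
  shows "local_product_structure X g f"
  unfolding local_product_structure_def
proof (intro allI impI)
  fix \<epsilon> :: real assume "\<epsilon> > 0"
  with assms obtain \<delta> where "\<delta> > 0"
    and \<delta>: "\<forall>x\<in>X. \<forall>y\<in>X. dist x y < \<delta> \<longrightarrow> Vs X f \<epsilon> x \<inter> Vu X g \<epsilon> y \<noteq> {}"
    unfolding local_product_structure_def by blast
  have "Vs X g \<epsilon> x \<inter> Vu X f \<epsilon> y \<noteq> {}" if "x \<in> X" "y \<in> X" "dist x y < \<delta>" for x y
    using \<delta> that by (metis Vu_eq_Vs Int_commute dist_commute)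
  with \<open>\<delta> > 0\<close> show "\<exists>\<delta>>0. \<forall>x\<in>X. \<forall>y\<in>X. dist x y < \<delta> \<longrightarrow> Vs X g \<epsilon> x \<inter> Vu X f \<epsilon> y \<noteq> {}"
    by blast
qed

locale compact_homeomorphism =
  fixes X :: "'a::metric_space set" and f g :: "'a \<Rightarrow> 'a"
  assumes compact: "compact X" and homeo: "homeomorphism X X f g"
begin

lemma f_in: "x \<in> X \<Longrightarrow> f x \<in> X" and g_in: "x \<in> X \<Longrightarrow> g x \<in> X"
  and g_f [simp]: "x \<in> X \<Longrightarrow> g (f x) = x" and f_g [simp]: "x \<in> X \<Longrightarrow> f (g x) = x"
  and continuous_f: "continuous_on X f"
  using homeo unfolding homeomorphism_def by auto

lemma inverse: "compact_homeomorphism X g f"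
  using compact homeo homeomorphism_sym unfolding compact_homeomorphism_def by blast

lemma funpow_f_in: "x \<in> X \<Longrightarrow> (f ^^ n) x \<in> X"
  by (induction n) (auto simp: f_in)

lemma funpow_g_in: "x \<in> X \<Longrightarrow> (g ^^ n) x \<in> X"
  by (induction n) (auto simp: g_in)

lemma iter_int_in: "x \<in> X \<Longrightarrow> iter_int f g k x \<in> X"
  by (simp add: iter_int_def funpow_f_in funpow_g_in)

lemma funpow_f_funpow_g_add: "x \<in> X \<Longrightarrow> (f ^^ (n + j)) ((g ^^ n) x) = (f ^^ j) x"
proof (induction n)
  case (Suc n)
  have "f ^^ (Suc n + j) = (f ^^ (n + j)) \<circ> f"
    by (simp only: add_Suc funpow_Suc_right)
  with Suc show ?case by (simp add: funpow_g_in)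
qed simp

lemma funpow_g_funpow_f: "x \<in> X \<Longrightarrow> n \<le> m \<Longrightarrow> (g ^^ n) ((f ^^ m) x) = (f ^^ (m - n)) x"
proof (induction n)
  case (Suc n)
  then have "(f ^^ (m - n)) x = f ((f ^^ (m - Suc n)) x)"
    by (metis Suc_diff_Suc Suc_le_lessD funpow.simps(2) o_apply)
  with Suc show ?case by (simp add: funpow_f_in)
qed simp

lemma f_iter_int: "x \<in> X \<Longrightarrow> f (iter_int f g k x) = iter_int f g (k + 1) x"
proof (cases "0 \<le> k")
  case True
  then have "nat (k + 1) = Suc (nat k)" by simp
  with True show ?thesis by (simp add: iter_int_def)
next
  case False
  assume "x \<in> X"
  from False have "nat (- k) = Suc (nat (- (k + 1)))" by simp
  with False \<open>x \<in> X\<close> show ?thesis by (auto simp: iter_int_def funpow_g_in)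
qed

lemma continuous_on_funpow_f: "continuous_on X (f ^^ n)"
proof (induction n)
  case (Suc n)
  have "(f ^^ n) ` X \<subseteq> X" using funpow_f_in by auto
  with Suc show ?case
    by (simp add: continuous_on_compose2[OF continuous_f])
qed simp

lemma continuous_on_iter_int: "continuous_on X (iter_int f g k)"
  using continuous_on_funpow_f compact_homeomorphism.continuous_on_funpow_f[OF inverse]
  by (simp add: iter_int_def)

lemma uniformly_continuous_f:
  "e > 0 \<Longrightarrow> \<exists>d>0. \<forall>a\<in>X. \<forall>b\<in>X. dist a b < d \<longrightarrow> dist (f a) (f b) < e"
  using compact_uniformly_continuous[OF continuous_f compact]
  unfolding uniformly_continuous_on_def by metis

lemma inverse_step_small:
  assumes "e > 0"
  shows "\<exists>\<sigma>>0. \<forall>a\<in>X. \<forall>b\<in>X. dist (f a) b < \<sigma> \<longrightarrow> dist a (g b) < e"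
proof -
  obtain \<sigma> where "\<sigma> > 0" and \<sigma>: "\<forall>a\<in>X. \<forall>b\<in>X. dist a b < \<sigma> \<longrightarrow> dist (g a) (g b) < e"
    using compact_homeomorphism.uniformly_continuous_f[OF inverse assms] by blast
  then show ?thesis by (metis f_in g_f)
qed

lemma inverse_step_errors_tendsto:
  assumes "\<And>n. a n \<in> X" and "\<And>n. b n \<in> X" and "((\<lambda>n. dist (f (a n)) (b n)) \<longlongrightarrow> 0) F"
  shows "((\<lambda>n. dist (a n) (g (b n))) \<longlongrightarrow> 0) F"
proof (rule tendstoI)
  fix e :: real assume "e > 0"
  then obtain \<sigma> where "\<sigma> > 0" and \<sigma>: "\<forall>a\<in>X. \<forall>b\<in>X. dist (f a) b < \<sigma> \<longrightarrow> dist a (g b) < e"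
    using inverse_step_small by blast
  from tendstoD[OF assms(3) \<open>\<sigma> > 0\<close>] show "eventually (\<lambda>n. dist (dist (a n) (g (b n))) 0 < e) F"
    by eventually_elim (use \<sigma> assms(1,2) in auto)
qed

lemma shadowing_inverse:
  assumes "shadowing X f g"
  shows "shadowing X g f"
  unfolding shadowing_def
proof (intro allI impI)
  fix \<epsilon> :: real assume "\<epsilon> > 0"
  from assms[unfolded shadowing_def, THEN spec, of \<epsilon>, THEN mp, OF this] obtain \<delta> where "\<delta> > 0"
    and \<delta>: "\<forall>x. (\<forall>k. x k \<in> X) \<longrightarrow> (\<forall>k. dist (f (x k)) (x (k + 1)) < \<delta>) \<longrightarrow>
      (\<exists>y\<in>X. \<forall>k. dist (iter_int f g k y) (x k) < \<epsilon>)"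
    by blast
  obtain \<sigma> where "\<sigma> > 0" and \<sigma>: "\<forall>a\<in>X. \<forall>b\<in>X. dist a b < \<sigma> \<longrightarrow> dist (f a) (f b) < \<delta>"
    using uniformly_continuous_f[OF \<open>\<delta> > 0\<close>] by blast
  have "\<exists>y\<in>X. \<forall>k. dist (iter_int g f k y) (u k) < \<epsilon>"
    if uX: "\<forall>k. u k \<in> X" and u: "\<forall>k. dist (g (u k)) (u (k + 1)) < \<sigma>" for u
  proof -
    have err: "dist (f (u (- k))) (u (- (k + 1))) < \<delta>" for k
    proof -
      have "dist (g (u (- k - 1))) (u (- k)) < \<sigma>"
        using u[rule_format, of "- k - 1"] by simp
      then have "dist (f (g (u (- k - 1)))) (f (u (- k))) < \<delta>"
        using \<sigma> uX g_in by blast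
      with uX show ?thesis by (simp add: dist_commute)
    qed
    have "\<forall>k. u (- k) \<in> X" using uX by blast
    then obtain y where "y \<in> X" and y: "\<forall>k. dist (iter_int f g k y) (u (- k)) < \<epsilon>"
      using \<delta>[THEN spec, of "\<lambda>k. u (- k)", THEN mp, THEN mp] err by blast
    have "dist (iter_int g f k y) (u k) < \<epsilon>" for k
      using y[rule_format, of "- k"] by (simp add: iter_int_swap[of g f k])
    with \<open>y \<in> X\<close> show ?thesis by blast
  qed
  with \<open>\<sigma> > 0\<close> show "\<exists>\<delta>>0. \<forall>u. (\<forall>k. u k \<in> X) \<longrightarrow> (\<forall>k. dist (g (u k)) (u (k + 1)) < \<delta>) \<longrightarrow>
      (\<exists>y\<in>X. \<forall>k. dist (iter_int g f k y) (u k) < \<epsilon>)"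
    by blast
qed

lemma shadowing_imp_forward_shadowing:
  assumes "shadowing X f g"
  shows "forward_shadowing X f"
  unfolding forward_shadowing_def
proof (intro allI impI)
  fix \<epsilon> :: real assume "\<epsilon> > 0"
  from assms[unfolded shadowing_def, THEN spec, of \<epsilon>, THEN mp, OF this] obtain \<delta> where "\<delta> > 0"
    and \<delta>: "\<forall>x. (\<forall>k. x k \<in> X) \<longrightarrow> (\<forall>k. dist (f (x k)) (x (k + 1)) < \<delta>) \<longrightarrow>
      (\<exists>y\<in>X. \<forall>k. dist (iter_int f g k y) (x k) < \<epsilon>)"
    by blast
  have "\<exists>y\<in>X. \<forall>n. dist ((f ^^ n) y) (x n) < \<epsilon>"
    if xX: "\<forall>n. x n \<in> X" and x: "\<forall>n. dist (f (x n)) (x (Suc n)) < \<delta>" for x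
  proof -
    define x' where "x' k = (if 0 \<le> k then x (nat k) else iter_int f g k (x 0))" for k
    have "dist (f (x' k)) (x' (k + 1)) < \<delta>" for k
    proof (cases "0 \<le> k")
      case True
      then have "nat (k + 1) = Suc (nat k)" by simp
      with True x show ?thesis by (simp add: x'_def)
    next
      case False
      then have "f (x' k) = x' (k + 1)"
        using xX by (cases "k + 1 = 0") (auto simp: x'_def f_iter_int)
      with \<open>\<delta> > 0\<close> show ?thesis by simp
    qed
    moreover have "x' k \<in> X" for k
      using xX by (simp add: x'_def iter_int_in)
    ultimately obtain y where "y \<in> X" and y: "\<forall>k. dist (iter_int f g k y) (x' k) < \<epsilon>"
      using \<delta>[THEN spec, of x'] by blast
    have "dist ((f ^^ n) y) (x n) < \<epsilon>" for n
      using y[rule_format, of "int n"] by (simp add: x'_def)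
    with \<open>y \<in> X\<close> show ?thesis by blast
  qed
  with \<open>\<delta> > 0\<close> show "\<exists>\<delta>>0. \<forall>x. (\<forall>k. x k \<in> X) \<longrightarrow> (\<forall>k. dist (f (x k)) (x (Suc k)) < \<delta>) \<longrightarrow>
      (\<exists>y\<in>X. \<forall>k. dist ((f ^^ k) y) (x k) < \<epsilon>)"
    by blast
qed

lemma window_extension_in: "\<forall>k. x k \<in> X \<Longrightarrow> window_extension f g N x k \<in> X"
  by (simp add: window_extension_def Let_def iter_int_in)

lemma limit_pseudo_orbit_window_extension:
  assumes xX: "\<forall>k. x k \<in> X" and x: "\<forall>k. dist (f (x k)) (x (k + 1)) \<le> \<delta>"
  shows "limit_pseudo_orbit f \<delta> (window_extension f g N x)"
proof -
  let ?xe = "window_extension f g N x"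
  have outside: "f (?xe k) = ?xe (k + 1)" if "\<not> (- int N \<le> k \<and> k < int N)" for k
  proof -
    from that have "max (- int N) (min (int N) (k + 1)) = max (- int N) (min (int N) k)"
      by auto
    with xX show ?thesis by (simp add: window_extension_def Let_def f_iter_int algebra_simps)
  qed
  have "0 \<le> \<delta>"
    using x zero_le_dist order_trans by blast
  have "dist (f (?xe k)) (?xe (k + 1)) \<le> \<delta>" for k
  proof (cases "- int N \<le> k \<and> k < int N")
    case True
    then have "?xe k = x k" and "?xe (k + 1) = x (k + 1)"
      by (simp_all add: window_extension_eq)
    with x show ?thesis by simp
  qed (simp add: outside \<open>0 \<le> \<delta>\<close>)
  moreover have "((\<lambda>k. dist (f (?xe k)) (?xe (k + 1))) \<longlongrightarrow> 0) at_top"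
    by (rule tendsto_eventually)
       (auto simp: eventually_at_top_linorder outside intro!: exI[of _ "int N"])
  moreover have "((\<lambda>k. dist (f (?xe k)) (?xe (k + 1))) \<longlongrightarrow> 0) at_bot"
    by (rule tendsto_eventually)
       (auto simp: eventually_at_bot_linorder outside intro!: exI[of _ "- int N - 1"])
  ultimately show ?thesis
    by (simp add: limit_pseudo_orbit_def)
qed

lemma L_shadowing_imp_shadowing:
  assumes "L_shadowing X f g"
  shows "shadowing X f g"
  unfolding shadowing_def
proof (intro allI impI)
  fix \<epsilon> :: real assume "\<epsilon> > 0"
  then have "\<epsilon> / 2 > 0" by simp
  with assms obtain \<delta> where "\<delta> > 0"
    and \<delta>: "\<And>x. \<forall>k. x k \<in> X \<Longrightarrow> limit_pseudo_orbit f \<delta> x \<Longrightarrow> \<exists>z\<in>X. limit_shadows f g (\<epsilon> / 2) z x"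
    unfolding L_shadowing_iff by meson
  have "\<exists>y\<in>X. \<forall>k. dist (iter_int f g k y) (x k) < \<epsilon>"
    if xX: "\<forall>k. x k \<in> X" and x: "\<forall>k. dist (f (x k)) (x (k + 1)) < \<delta>" for x
  proof -
    have "\<forall>k. dist (f (x k)) (x (k + 1)) \<le> \<delta>"
      using x by (simp add: less_imp_le)
    moreover have "\<forall>k. window_extension f g N x k \<in> X" for N
      using window_extension_in[OF xX] by blast
    ultimately have "\<exists>z\<in>X. limit_shadows f g (\<epsilon> / 2) z (window_extension f g N x)" for N
      using \<delta> limit_pseudo_orbit_window_extension[OF xX] by presburger
    then obtain zs where zsX: "\<And>N. zs N \<in> X"
      and zs: "\<And>N k. dist (iter_int f g k (zs N)) (window_extension f g N x k) \<le> \<epsilon> / 2"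
      unfolding limit_shadows_def by metis
    have "\<exists>z\<in>X. \<forall>k\<in>UNIV. dist (iter_int f g k z) (x k) \<le> \<epsilon> / 2"
    proof (rule compact_cluster_point_keeps_bounds[OF compact zsX continuous_on_iter_int])
      fix k :: int
      have "dist (iter_int f g k (zs N)) (x k) \<le> \<epsilon> / 2" if "nat \<bar>k\<bar> \<le> N" for N
      proof -
        have "window_extension f g N x k = x k"
          using that by (intro window_extension_eq) auto
        then show ?thesis using zs by metis
      qed
      then show "eventually (\<lambda>N. dist (iter_int f g k (zs N)) (x k) \<le> \<epsilon> / 2) sequentially"
        by (rule eventually_sequentiallyI)
    qed
    then obtain z where "z \<in> X" and z: "\<And>k. dist (iter_int f g k z) (x k) \<le> \<epsilon> / 2"
      by blast
    have "dist (iter_int f g k z) (x k) < \<epsilon>" for k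
      using z[of k] \<open>\<epsilon> > 0\<close> by linarith
    with \<open>z \<in> X\<close> show ?thesis by blast
  qed
  with \<open>\<delta> > 0\<close> show "\<exists>\<delta>>0. \<forall>x. (\<forall>k. x k \<in> X) \<longrightarrow> (\<forall>k. dist (f (x k)) (x (k + 1)) < \<delta>) \<longrightarrow>
      (\<exists>y\<in>X. \<forall>k. dist (iter_int f g k y) (x k) < \<epsilon>)"
    by blast
qed

lemma limit_pseudo_orbit_jump:
  assumes "x \<in> X" and "y \<in> X" and "dist (f y) (f x) \<le> \<delta>"
  shows "limit_pseudo_orbit f \<delta> (\<lambda>k. iter_int f g k (if k \<le> 0 then y else x))"
proof -
  let ?s = "\<lambda>k. iter_int f g k (if k \<le> 0 then y else x)"
  have orbit: "f (?s k) = ?s (k + 1)" if "k \<noteq> 0" for k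
  proof (cases "k < 0")
    case True
    then show ?thesis using f_iter_int[OF assms(2), of k] by simp
  next
    case False
    then show ?thesis using that f_iter_int[OF assms(1), of k] by simp
  qed
  have "0 \<le> \<delta>"
    using assms(3) zero_le_dist order_trans by blast
  have "dist (f (?s k)) (?s (k + 1)) \<le> \<delta>" for k
  proof (cases "k = 0")
    case True
    have "?s 0 = y" and "?s 1 = f x"
      by (simp_all add: iter_int_def)
    with True assms(3) show ?thesis by simp
  qed (simp add: orbit \<open>0 \<le> \<delta>\<close>)
  moreover have "((\<lambda>k. dist (f (?s k)) (?s (k + 1))) \<longlongrightarrow> 0) at_top"
    using eventually_at_top_not_equal[of 0]
    by (rule tendsto_eventually[OF eventually_mono]) (simp add: orbit)
  moreover have "((\<lambda>k. dist (f (?s k)) (?s (k + 1))) \<longlongrightarrow> 0) at_bot"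
    using eventually_at_bot_not_equal[of 0]
    by (rule tendsto_eventually[OF eventually_mono]) (simp add: orbit)
  ultimately show ?thesis
    by (simp add: limit_pseudo_orbit_def)
qed

lemma L_shadowing_imp_local_product_structure:
  assumes "L_shadowing X f g"
  shows "local_product_structure X f g"
  unfolding local_product_structure_def
proof (intro allI impI)
  fix \<epsilon> :: real assume "\<epsilon> > 0"
  then have "\<epsilon> / 2 > 0" by simp
  with assms obtain \<delta> where "\<delta> > 0"
    and \<delta>: "\<And>x. \<forall>k. x k \<in> X \<Longrightarrow> limit_pseudo_orbit f \<delta> x \<Longrightarrow> \<exists>z\<in>X. limit_shadows f g (\<epsilon> / 2) z x"
    unfolding L_shadowing_iff by meson
  obtain \<sigma> where "\<sigma> > 0" and \<sigma>: "\<forall>a\<in>X. \<forall>b\<in>X. dist a b < \<sigma> \<longrightarrow> dist (f a) (f b) < \<delta>"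
    using uniformly_continuous_f[OF \<open>\<delta> > 0\<close>] by blast
  have "Vs X f \<epsilon> x \<inter> Vu X g \<epsilon> y \<noteq> {}"
    if "x \<in> X" "y \<in> X" and xy: "dist x y < min \<sigma> (\<epsilon> / 2)" for x y
  proof -
    let ?s = "\<lambda>k. iter_int f g k (if k \<le> 0 then y else x)"
    have "dist (f y) (f x) \<le> \<delta>"
      using \<sigma> that xy by (simp add: dist_commute less_imp_le)
    then have "limit_pseudo_orbit f \<delta> ?s"
      using limit_pseudo_orbit_jump that by blast
    moreover have "\<forall>k. ?s k \<in> X"
      using that iter_int_in by simp
    ultimately obtain z where "z \<in> X" and "limit_shadows f g (\<epsilon> / 2) z ?s"
      using \<delta> by meson
    then have "z \<in> Vs X f (2 * (\<epsilon> / 2)) x \<inter> Vu X g (2 * (\<epsilon> / 2)) y"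
      using xy by (intro limit_shadows_jump_in_V) (simp_all del: of_nat_Suc)
    then show ?thesis by auto
  qed
  with \<open>\<sigma> > 0\<close> \<open>\<epsilon> > 0\<close> show "\<exists>\<delta>>0. \<forall>x\<in>X. \<forall>y\<in>X. dist x y < \<delta> \<longrightarrow> Vs X f \<epsilon> x \<inter> Vu X g \<epsilon> y \<noteq> {}"
    by (intro exI[of _ "min \<sigma> (\<epsilon> / 2)"]) auto
qed

lemma Wu_loc_pullback_close:
  assumes "w \<in> X" and v: "v \<in> Wu_loc X g \<epsilon> ((f ^^ N) w)" and "k \<le> N"
  shows "dist ((f ^^ k) ((g ^^ N) v)) ((f ^^ k) w) \<le> \<epsilon>"
proof -
  from v have "v \<in> X" by (simp add: Wu_loc_def)
  have "(g ^^ N) v = (g ^^ k) ((g ^^ (N - k)) v)"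
    using \<open>k \<le> N\<close> by (metis funpow_add le_add_diff_inverse o_apply)
  then have "(f ^^ k) ((g ^^ N) v) = (g ^^ (N - k)) v"
    using funpow_f_funpow_g_add[of _ k 0] funpow_g_in \<open>v \<in> X\<close> by simp
  moreover have "(f ^^ k) w = (g ^^ (N - k)) ((f ^^ N) w)"
    using funpow_g_funpow_f[OF \<open>w \<in> X\<close>, of "N - k" N] \<open>k \<le> N\<close> by simp
  ultimately show ?thesis
    using v by (simp add: Wu_loc_def dist_commute)
qed

lemma forward_L_step:
  assumes xX: "\<forall>k. x k \<in> X" and err: "(\<lambda>k. dist (f (x k)) (x (Suc k))) \<longlonglongrightarrow> 0"
    and "\<sigma> > 0" and "\<gamma> > 0"
    and shadow: "\<forall>u. (\<forall>k. u k \<in> X) \<longrightarrow> (\<forall>k. dist (f (u k)) (u (Suc k)) < \<sigma>) \<longrightarrow>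
                   (\<exists>y\<in>X. \<forall>k. dist ((f ^^ k) y) (u k) < \<gamma>)"
    and product: "\<forall>a\<in>X. \<forall>b\<in>X. dist a b < \<gamma> + \<rho> \<longrightarrow> Vs X f \<epsilon> a \<inter> Vu X g \<epsilon> b \<noteq> {}"
    and "w \<in> X" and close: "eventually (\<lambda>k. dist ((f ^^ k) w) (x k) < \<rho>) sequentially"
  shows "\<exists>N w'. w' \<in> X \<and> (\<forall>k\<ge>N. dist ((f ^^ k) w') (x k) \<le> \<epsilon> + \<gamma>)
            \<and> eventually (\<lambda>k. dist ((f ^^ k) w') (x k) < 2 * \<gamma>) sequentially
            \<and> (\<forall>k\<le>N. dist ((f ^^ k) w') ((f ^^ k) w) \<le> \<epsilon>)"
proof -
  have "eventually (\<lambda>N. (\<forall>k\<ge>N. dist (f (x k)) (x (Suc k)) < \<sigma>) \<and> dist ((f ^^ N) w) (x N) < \<rho>) sequentially"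
    using eventually_all_ge_at_top[OF order_tendstoD(2)[OF err \<open>\<sigma> > 0\<close>]] close
    by (rule eventually_conj)
  then obtain N where tail: "\<forall>k\<ge>N. dist (f (x k)) (x (Suc k)) < \<sigma>"
    and "dist ((f ^^ N) w) (x N) < \<rho>"
    by (auto simp: eventually_sequentially)
  obtain y where "y \<in> X" and y: "\<forall>j. dist ((f ^^ j) y) (x (N + j)) < \<gamma>"
    using shadow[THEN spec, of "\<lambda>j. x (N + j)"] xX tail by auto
  have "dist y ((f ^^ N) w) < \<gamma> + \<rho>"
    using dist_triangle[of y "(f ^^ N) w" "x N"] y[rule_format, of 0] \<open>dist ((f ^^ N) w) (x N) < \<rho>\<close>
    by (simp add: dist_commute[of "x N"])
  \<comment> \<open>v follows y forward and the orbit of w backward; pulled back by N it is the splice.\<close>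
  with product \<open>y \<in> X\<close> funpow_f_in[OF \<open>w \<in> X\<close>] obtain v where
    v: "v \<in> Vs X f \<epsilon> y" "v \<in> Wu_loc X g \<epsilon> ((f ^^ N) w)"
    unfolding Vu_def by blast
  then have "v \<in> X"
    by (simp add: Wu_loc_def)
  have v_y: "\<forall>j. dist ((f ^^ j) y) ((f ^^ j) v) \<le> \<epsilon>"
    and v_y_lim: "(\<lambda>j. dist ((f ^^ j) y) ((f ^^ j) v)) \<longlonglongrightarrow> 0"
    using v(1) by (simp_all add: Vs_def Ws_def Ws_loc_def)
  define w' where "w' = (g ^^ N) v"
  have shift: "(f ^^ (N + j)) w' = (f ^^ j) v" for j
    using funpow_f_funpow_g_add[OF \<open>v \<in> X\<close>] by (simp add: w'_def)
  have after: "dist ((f ^^ (N + j)) w') (x (N + j)) \<le> dist ((f ^^ j) y) ((f ^^ j) v) + dist ((f ^^ j) y) (x (N + j))" for j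
    by (simp add: shift dist_triangle3)
  have "dist ((f ^^ k) w') (x k) \<le> \<epsilon> + \<gamma>" if "N \<le> k" for k
    using after[of "k - N"] v_y y that by (smt (verit) le_add_diff_inverse)
  moreover have "eventually (\<lambda>k. dist ((f ^^ k) w') (x k) < 2 * \<gamma>) sequentially"
  proof -
    obtain J where J: "\<forall>j\<ge>J. dist ((f ^^ j) y) ((f ^^ j) v) < \<gamma>"
      using order_tendstoD(2)[OF v_y_lim \<open>\<gamma> > 0\<close>] by (auto simp: eventually_sequentially)
    have "dist ((f ^^ k) w') (x k) < 2 * \<gamma>" if "N + J \<le> k" for k
      using after[of "k - N"] J[rule_format, of "k - N"] y[rule_format, of "k - N"] that
      by (smt (verit) le_add_diff_inverse add_leD1 le_diff_conv2 add.commute)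
    then show ?thesis by (rule eventually_sequentiallyI)
  qed
  moreover have "\<forall>k\<le>N. dist ((f ^^ k) w') ((f ^^ k) w) \<le> \<epsilon>"
    using Wu_loc_pullback_close[OF \<open>w \<in> X\<close> v(2)] by (simp add: w'_def)
  moreover have "w' \<in> X"
    using funpow_g_in[OF \<open>v \<in> X\<close>] by (simp add: w'_def)
  ultimately show ?thesis by blast
qed

lemma forward_L_construction:
  assumes xX: "\<forall>k. x k \<in> X" and x_lim: "(\<lambda>k. dist (f (x k)) (x (Suc k))) \<longlonglongrightarrow> 0"
    and x_small: "\<forall>k. dist (f (x k)) (x (Suc k)) < \<sigma> 0"
    and \<sigma>_pos: "\<And>m. \<sigma> m > 0" and \<gamma>_pos: "\<And>m. \<gamma> m > 0" and \<gamma>_le: "\<And>m. \<gamma> m \<le> e m"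
    and shadow: "\<And>m. \<forall>u. (\<forall>k. u k \<in> X) \<longrightarrow> (\<forall>k. dist (f (u k)) (u (Suc k)) < \<sigma> m) \<longrightarrow>
                   (\<exists>y\<in>X. \<forall>k. dist ((f ^^ k) y) (u k) < \<gamma> m)"
    and product: "\<And>m. \<forall>a\<in>X. \<forall>b\<in>X. dist a b < \<gamma> (Suc m) + 2 * \<gamma> m \<longrightarrow>
                   Vs X f (e (Suc m)) a \<inter> Vu X g (e (Suc m)) b \<noteq> {}"
  shows "\<exists>N w. N 0 = 0 \<and> (\<forall>m. w m \<in> X)
           \<and> (\<forall>m k. N m \<le> k \<longrightarrow> dist ((f ^^ k) (w m)) (x k) \<le> 2 * e m)
           \<and> (\<forall>m k. k \<le> N (Suc m) \<longrightarrow> dist ((f ^^ k) (w (Suc m))) ((f ^^ k) (w m)) \<le> e (Suc m))"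
proof -
  define Inv where "Inv m s \<longleftrightarrow> snd s \<in> X
      \<and> (\<forall>k\<ge>fst s. dist ((f ^^ k) (snd s)) (x k) \<le> 2 * e m)
      \<and> eventually (\<lambda>k. dist ((f ^^ k) (snd s)) (x k) < 2 * \<gamma> m) sequentially
      \<and> (m = 0 \<longrightarrow> fst s = 0)" for m and s :: "nat \<times> 'a"
  define Close where "Close m s s' \<longleftrightarrow>
      (\<forall>k\<le>fst s'. dist ((f ^^ k) (snd s')) ((f ^^ k) (snd s)) \<le> e (Suc m))" for m and s s' :: "nat \<times> 'a"
  have "\<exists>s. Inv 0 s"
  proof -
    obtain y where "y \<in> X" and y: "\<forall>k. dist ((f ^^ k) y) (x k) < \<gamma> 0"
      using shadow[of 0, THEN spec, of x] xX x_small by blast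
    have "dist ((f ^^ k) y) (x k) \<le> 2 * e 0" for k
      using y[rule_format, of k] \<gamma>_le[of 0] \<gamma>_pos[of 0] by linarith
    moreover have "dist ((f ^^ k) y) (x k) < 2 * \<gamma> 0" for k
      using y[rule_format, of k] \<gamma>_pos[of 0] by simp
    ultimately have "Inv 0 (0, y)"
      unfolding Inv_def using \<open>y \<in> X\<close> by (simp add: always_eventually)
    then show ?thesis ..
  qed
  moreover have "\<exists>s'. Inv (Suc m) s' \<and> Close m s s'" if "Inv m s" for m s
  proof -
    from that have "snd s \<in> X"
      and close: "eventually (\<lambda>k. dist ((f ^^ k) (snd s)) (x k) < 2 * \<gamma> m) sequentially"
      by (simp_all add: Inv_def)
    from forward_L_step[OF xX x_lim \<sigma>_pos \<gamma>_pos shadow product \<open>snd s \<in> X\<close> close]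
    obtain N w' where "w' \<in> X" and "\<forall>k\<ge>N. dist ((f ^^ k) w') (x k) \<le> e (Suc m) + \<gamma> (Suc m)"
      and "eventually (\<lambda>k. dist ((f ^^ k) w') (x k) < 2 * \<gamma> (Suc m)) sequentially"
      and "\<forall>k\<le>N. dist ((f ^^ k) w') ((f ^^ k) (snd s)) \<le> e (Suc m)"
      by blast
    moreover have "e (Suc m) + \<gamma> (Suc m) \<le> 2 * e (Suc m)"
      using \<gamma>_le[of "Suc m"] by simp
    ultimately have "Inv (Suc m) (N, w') \<and> Close m s (N, w')"
      unfolding Inv_def Close_def by (auto intro: order_trans)
    then show ?thesis ..
  qed
  ultimately obtain st where st: "\<And>m. Inv m (st m)" "\<And>m. Close m (st m) (st (Suc m))"
    using dependent_nat_choice[of Inv Close] by blast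
  then show ?thesis
    unfolding Inv_def Close_def by (intro exI[of _ "fst \<circ> st"] exI[of _ "snd \<circ> st"]) auto
qed

lemma forward_L_approximants:
  assumes fs: "forward_shadowing X f" and lp: "local_product_structure X f g" and "\<eta> > 0"
  defines "e m \<equiv> \<eta> / 4 / 2 ^ m"
  obtains \<delta> where "\<delta> > 0"
    and "\<And>x. \<forall>k. x k \<in> X \<Longrightarrow> \<forall>k. dist (f (x k)) (x (Suc k)) \<le> \<delta> \<Longrightarrow>
           (\<lambda>k. dist (f (x k)) (x (Suc k))) \<longlonglongrightarrow> 0 \<Longrightarrow>
           \<exists>N w. N 0 = 0 \<and> (\<forall>m. w m \<in> X)
             \<and> (\<forall>m k. N m \<le> k \<longrightarrow> dist ((f ^^ k) (w m)) (x k) \<le> 2 * e m)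
             \<and> (\<forall>m k. k \<le> N (Suc m) \<longrightarrow> dist ((f ^^ k) (w (Suc m))) ((f ^^ k) (w m)) \<le> e (Suc m))"
proof -
  have e_pos: "e m > 0" for m
    using \<open>\<eta> > 0\<close> by (simp add: e_def)
  have "\<forall>m. \<exists>\<rho>>0. \<forall>a\<in>X. \<forall>b\<in>X. dist a b < \<rho> \<longrightarrow> Vs X f (e m) a \<inter> Vu X g (e m) b \<noteq> {}"
    using lp[unfolded local_product_structure_def] e_pos by blast
  then obtain \<rho> where \<rho>_pos: "\<And>m. \<rho> m > 0"
    and \<rho>: "\<And>m. \<forall>a\<in>X. \<forall>b\<in>X. dist a b < \<rho> m \<longrightarrow> Vs X f (e m) a \<inter> Vu X g (e m) b \<noteq> {}"
    by metis
  \<comment> \<open>Two consecutive shadowing tolerances must fit into one product tolerance.\<close>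
  define \<gamma> where "\<gamma> m = min (e m) (min (\<rho> m) (\<rho> (Suc m)) / 3)" for m
  have \<gamma>_pos: "\<gamma> m > 0" for m
    using e_pos \<rho>_pos by (simp add: \<gamma>_def)
  have "\<forall>m. \<exists>\<sigma>>0. \<forall>u. (\<forall>k. u k \<in> X) \<longrightarrow> (\<forall>k. dist (f (u k)) (u (Suc k)) < \<sigma>) \<longrightarrow>
          (\<exists>y\<in>X. \<forall>k. dist ((f ^^ k) y) (u k) < \<gamma> m)"
    using fs[unfolded forward_shadowing_def] \<gamma>_pos by blast
  then obtain \<sigma> where \<sigma>_pos: "\<And>m. \<sigma> m > 0"
    and \<sigma>: "\<And>m. \<forall>u. (\<forall>k. u k \<in> X) \<longrightarrow> (\<forall>k. dist (f (u k)) (u (Suc k)) < \<sigma> m) \<longrightarrow>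
               (\<exists>y\<in>X. \<forall>k. dist ((f ^^ k) y) (u k) < \<gamma> m)"
    by metis
  have product: "\<forall>a\<in>X. \<forall>b\<in>X. dist a b < \<gamma> (Suc m) + 2 * \<gamma> m \<longrightarrow>
      Vs X f (e (Suc m)) a \<inter> Vu X g (e (Suc m)) b \<noteq> {}" for m
  proof -
    have "\<gamma> (Suc m) + 2 * \<gamma> m \<le> \<rho> (Suc m)" by (simp add: \<gamma>_def)
    with \<rho>[of "Suc m"] show ?thesis by fastforce
  qed
  show thesis
  proof (rule that[of "\<sigma> 0 / 2"])
    show "\<sigma> 0 / 2 > 0" using \<sigma>_pos[of 0] by simp
    fix x assume xX: "\<forall>k. x k \<in> X" and x_small: "\<forall>k. dist (f (x k)) (x (Suc k)) \<le> \<sigma> 0 / 2"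
      and x_lim: "(\<lambda>k. dist (f (x k)) (x (Suc k))) \<longlonglongrightarrow> 0"
    have x_lt: "\<forall>k. dist (f (x k)) (x (Suc k)) < \<sigma> 0"
    proof
      fix k show "dist (f (x k)) (x (Suc k)) < \<sigma> 0"
        using x_small[rule_format, of k] \<sigma>_pos[of 0] by linarith
    qed
    have \<gamma>_le: "\<gamma> m \<le> e m" for m
      by (simp add: \<gamma>_def)
    show "\<exists>N w. N 0 = 0 \<and> (\<forall>m. w m \<in> X)
             \<and> (\<forall>m k. N m \<le> k \<longrightarrow> dist ((f ^^ k) (w m)) (x k) \<le> 2 * e m)
             \<and> (\<forall>m k. k \<le> N (Suc m) \<longrightarrow> dist ((f ^^ k) (w (Suc m))) ((f ^^ k) (w m)) \<le> e (Suc m))"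
      by (rule forward_L_construction[OF xX x_lim x_lt \<sigma>_pos \<gamma>_pos \<gamma>_le \<sigma> product])
  qed
qed

lemma forward_shadowing_imp_forward_L_shadowing:
  assumes "forward_shadowing X f" and "local_product_structure X f g"
  shows "forward_L_shadowing X f"
  unfolding forward_L_shadowing_def
proof (intro allI impI)
  fix \<eta> :: real assume "\<eta> > 0"
  define e where "e m = \<eta> / 4 / 2 ^ m" for m :: nat
  obtain \<delta> where "\<delta> > 0" and approx: "\<And>x. \<forall>k. x k \<in> X \<Longrightarrow> \<forall>k. dist (f (x k)) (x (Suc k)) \<le> \<delta> \<Longrightarrow>
      (\<lambda>k. dist (f (x k)) (x (Suc k))) \<longlonglongrightarrow> 0 \<Longrightarrow>
      \<exists>N w. N 0 = 0 \<and> (\<forall>m. w m \<in> X)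
        \<and> (\<forall>m k. N m \<le> k \<longrightarrow> dist ((f ^^ k) (w m)) (x k) \<le> 2 * e m)
        \<and> (\<forall>m k. k \<le> N (Suc m) \<longrightarrow> dist ((f ^^ k) (w (Suc m))) ((f ^^ k) (w m)) \<le> e (Suc m))"
    unfolding e_def by (rule forward_L_approximants[OF assms \<open>\<eta> > 0\<close>]) auto
  have "\<exists>z\<in>X. (\<forall>k. dist ((f ^^ k) z) (x k) \<le> \<eta>) \<and> (\<lambda>k. dist ((f ^^ k) z) (x k)) \<longlonglongrightarrow> 0"
    if x: "\<forall>k. x k \<in> X" "\<forall>k. dist (f (x k)) (x (Suc k)) \<le> \<delta>"
      "(\<lambda>k. dist (f (x k)) (x (Suc k))) \<longlonglongrightarrow> 0" for x
  proof -
    obtain N w where "N 0 = 0" and wX: "\<And>m. w m \<in> X"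
      and base: "\<And>m k. N m \<le> k \<Longrightarrow> dist ((f ^^ k) (w m)) (x k) \<le> 2 * e m"
      and step: "\<And>m k. k \<le> N (Suc m) \<Longrightarrow> dist ((f ^^ k) (w (Suc m))) ((f ^^ k) (w m)) \<le> e (Suc m)"
      using approx[OF x] by blast
    have "e (Suc m) = e m / 2" and "e m \<ge> 0" for m
      using \<open>\<eta> > 0\<close> by (simp_all add: e_def)
    note chain = halving_chain_bound[where p = "\<lambda>m k. (f ^^ k) (w m)", OF base step this]
    have "\<exists>z\<in>X. \<forall>i\<in>{(k, m). N m \<le> k}. dist ((f ^^ fst i) z) (x (fst i)) \<le> 3 * e (snd i)"
    proof (rule compact_cluster_point_keeps_bounds[OF compact wX continuous_on_funpow_f])
      show "eventually (\<lambda>n. dist ((f ^^ fst i) (w n)) (x (fst i)) \<le> 3 * e (snd i)) sequentially"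
        if "i \<in> {(k, m). N m \<le> k}" for i
        using that chain by (auto intro!: eventually_sequentiallyI[of "snd i"])
    qed
    then obtain z where "z \<in> X" and z: "\<And>m k. N m \<le> k \<Longrightarrow> dist ((f ^^ k) z) (x k) \<le> 3 * e m"
      by fastforce
    have "dist ((f ^^ k) z) (x k) \<le> \<eta>" for k
      using z[of 0 k] \<open>N 0 = 0\<close> \<open>\<eta> > 0\<close> by (simp add: e_def)
    moreover have "(\<lambda>k. dist ((f ^^ k) z) (x k)) \<longlonglongrightarrow> 0"
    proof (rule tendstoI)
      fix r :: real assume "r > 0"
      have "(\<lambda>m. 3 * \<eta> / 4 / 2 ^ m) \<longlonglongrightarrow> 0"
        by (rule LIMSEQ_divide_realpow_zero) simp
      from order_tendstoD(2)[OF this \<open>r > 0\<close>] obtain m where "3 * e m < r"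
        by (auto simp: e_def eventually_sequentially)
      with z[of m] show "eventually (\<lambda>k. dist (dist ((f ^^ k) z) (x k)) 0 < r) sequentially"
        by (auto intro!: eventually_sequentiallyI[of "N m"] intro: order.strict_trans1)
    qed
    ultimately show ?thesis using \<open>z \<in> X\<close> by blast
  qed
  with \<open>\<delta> > 0\<close> show "\<exists>\<delta>>0. \<forall>x. (\<forall>k. x k \<in> X) \<longrightarrow> (\<forall>k. dist (f (x k)) (x (Suc k)) \<le> \<delta>) \<longrightarrow>
      (\<lambda>k. dist (f (x k)) (x (Suc k))) \<longlonglongrightarrow> 0 \<longrightarrow>
      (\<exists>z\<in>X. (\<forall>k. dist ((f ^^ k) z) (x k) \<le> \<eta>) \<and> (\<lambda>k. dist ((f ^^ k) z) (x k)) \<longlonglongrightarrow> 0)"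
    by blast
qed

lemma reversed_errors_tendsto:
  assumes "\<forall>k. x k \<in> X" and "((\<lambda>k. dist (f (x k)) (x (k + 1))) \<longlongrightarrow> 0) at_bot"
  shows "(\<lambda>n. dist (g (x (- int n))) (x (- int (Suc n)))) \<longlonglongrightarrow> 0"
proof -
  have step: "- int (Suc n) + 1 = - int n" for n
    by simp
  have "(\<lambda>n. dist (f (x (- int (Suc n)))) (x (- int n))) \<longlonglongrightarrow> 0"
    using LIMSEQ_Suc[OF assms(2)[unfolded tendsto_at_bot_int_iff]] by (simp only: step)
  from inverse_step_errors_tendsto[OF _ _ this] assms(1) show ?thesis
    by (simp add: dist_commute)
qed

lemma reversed_limit_pseudo_orbit:
  assumes "\<delta> > 0"
  obtains \<sigma> where "\<sigma> > 0"
    and "\<And>x. \<forall>k. x k \<in> X \<Longrightarrow> limit_pseudo_orbit f \<sigma> x \<Longrightarrow>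
           \<forall>n. dist (g (x (- int n))) (x (- int (Suc n))) \<le> \<delta>"
    and "\<And>x. \<forall>k. x k \<in> X \<Longrightarrow> limit_pseudo_orbit f \<sigma> x \<Longrightarrow>
           (\<lambda>n. dist (g (x (- int n))) (x (- int (Suc n)))) \<longlonglongrightarrow> 0"
proof -
  obtain \<sigma> where "\<sigma> > 0" and \<sigma>: "\<forall>a\<in>X. \<forall>b\<in>X. dist (f a) b < \<sigma> \<longrightarrow> dist a (g b) < \<delta>"
    using inverse_step_small[OF assms] by blast
  show thesis
  proof (rule that[of "\<sigma> / 2"])
    show "\<sigma> / 2 > 0" using \<open>\<sigma> > 0\<close> by simp
    fix x assume xX: "\<forall>k. x k \<in> X" and x: "limit_pseudo_orbit f (\<sigma> / 2) x"
    show "\<forall>n. dist (g (x (- int n))) (x (- int (Suc n))) \<le> \<delta>"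
    proof
      fix n
      have "- int (Suc n) + 1 = - int n" by simp
      moreover have "dist (f (x (- int (Suc n)))) (x (- int (Suc n) + 1)) \<le> \<sigma> / 2"
        using x unfolding limit_pseudo_orbit_def by blast
      ultimately have "dist (f (x (- int (Suc n)))) (x (- int n)) < \<sigma>"
        using \<open>\<sigma> > 0\<close> by simp
      with \<sigma> xX have "dist (x (- int (Suc n))) (g (x (- int n))) < \<delta>" by blast
      then show "dist (g (x (- int n))) (x (- int (Suc n))) \<le> \<delta>" by (simp add: dist_commute)
    qed
    show "(\<lambda>n. dist (g (x (- int n))) (x (- int (Suc n)))) \<longlonglongrightarrow> 0"
      using x by (intro reversed_errors_tendsto[OF xX]) (simp add: limit_pseudo_orbit_def)
  qed
qed

lemma shadowing_local_product_imp_L_shadowing: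
  assumes sh: "shadowing X f g" and lp: "local_product_structure X f g"
  shows "L_shadowing X f g"
proof -
  interpret inv: compact_homeomorphism X g f
    by (rule inverse)
  have fwd_f: "forward_L_shadowing X f"
    using forward_shadowing_imp_forward_L_shadowing[OF shadowing_imp_forward_shadowing[OF sh] lp] .
  have fwd_g: "forward_L_shadowing X g"
    using inv.forward_shadowing_imp_forward_L_shadowing[OF
        inv.shadowing_imp_forward_shadowing[OF shadowing_inverse[OF sh]] local_product_structure_sym[OF lp]] .
  show ?thesis
    unfolding L_shadowing_iff
  proof (intro allI impI)
    fix \<epsilon> :: real assume "\<epsilon> > 0"
    then have "\<epsilon> / 2 > 0" by simp
    from lp[unfolded local_product_structure_def, THEN spec, of "\<epsilon> / 2", THEN mp, OF this]
    obtain \<rho> where "\<rho> > 0"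
      and \<rho>: "\<forall>a\<in>X. \<forall>b\<in>X. dist a b < \<rho> \<longrightarrow> Vs X f (\<epsilon> / 2) a \<inter> Vu X g (\<epsilon> / 2) b \<noteq> {}"
      by blast
    define \<eta> where "\<eta> = min (\<epsilon> / 4) (\<rho> / 3)"
    have "\<eta> > 0" using \<open>\<epsilon> > 0\<close> \<open>\<rho> > 0\<close> by (simp add: \<eta>_def)
    from fwd_f[unfolded forward_L_shadowing_def, THEN spec, of \<eta>, THEN mp, OF \<open>\<eta> > 0\<close>]
    obtain \<delta>f where "\<delta>f > 0"
      and \<delta>f: "\<forall>u. (\<forall>k. u k \<in> X) \<longrightarrow> (\<forall>k. dist (f (u k)) (u (Suc k)) \<le> \<delta>f) \<longrightarrow>
        (\<lambda>k. dist (f (u k)) (u (Suc k))) \<longlonglongrightarrow> 0 \<longrightarrow>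
        (\<exists>z\<in>X. (\<forall>k. dist ((f ^^ k) z) (u k) \<le> \<eta>) \<and> (\<lambda>k. dist ((f ^^ k) z) (u k)) \<longlonglongrightarrow> 0)"
      by blast
    from fwd_g[unfolded forward_L_shadowing_def, THEN spec, of \<eta>, THEN mp, OF \<open>\<eta> > 0\<close>]
    obtain \<delta>g where "\<delta>g > 0"
      and \<delta>g: "\<forall>u. (\<forall>k. u k \<in> X) \<longrightarrow> (\<forall>k. dist (g (u k)) (u (Suc k)) \<le> \<delta>g) \<longrightarrow>
        (\<lambda>k. dist (g (u k)) (u (Suc k))) \<longlonglongrightarrow> 0 \<longrightarrow>
        (\<exists>z\<in>X. (\<forall>k. dist ((g ^^ k) z) (u k) \<le> \<eta>) \<and> (\<lambda>k. dist ((g ^^ k) z) (u k)) \<longlonglongrightarrow> 0)"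
      by blast
    obtain \<sigma> where "\<sigma> > 0"
      and back_small: "\<And>x. \<forall>k. x k \<in> X \<Longrightarrow> limit_pseudo_orbit f \<sigma> x \<Longrightarrow>
           \<forall>n. dist (g (x (- int n))) (x (- int (Suc n))) \<le> \<delta>g"
      and back_lim: "\<And>x. \<forall>k. x k \<in> X \<Longrightarrow> limit_pseudo_orbit f \<sigma> x \<Longrightarrow>
           (\<lambda>n. dist (g (x (- int n))) (x (- int (Suc n)))) \<longlonglongrightarrow> 0"
      using reversed_limit_pseudo_orbit[OF \<open>\<delta>g > 0\<close>] by blast
    have "\<exists>z\<in>X. limit_shadows f g \<epsilon> z x"
      if xX: "\<forall>k. x k \<in> X" and x: "limit_pseudo_orbit f (min \<delta>f \<sigma>) x" for x
    proof -
      from x have x_small: "\<forall>k. dist (f (x k)) (x (k + 1)) \<le> \<delta>f"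
        and x_top: "((\<lambda>k. dist (f (x k)) (x (k + 1))) \<longlongrightarrow> 0) at_top"
        unfolding limit_pseudo_orbit_def by auto
      have "\<exists>z\<in>X. (\<forall>n. dist ((f ^^ n) z) (x (int n)) \<le> \<eta>) \<and> (\<lambda>n. dist ((f ^^ n) z) (x (int n))) \<longlonglongrightarrow> 0"
      proof (rule \<delta>f[rule_format])
        show "x (int n) \<in> X" for n
          using xX by simp
        show "dist (f (x (int n))) (x (int (Suc n))) \<le> \<delta>f" for n
          using x_small[rule_format, of "int n"] by (simp add: add.commute)
        show "(\<lambda>n. dist (f (x (int n))) (x (int (Suc n)))) \<longlonglongrightarrow> 0"
          using x_top[unfolded tendsto_at_top_int_iff] by (simp add: add.commute)
      qed
      then obtain zf where "zf \<in> X" and zf: "\<forall>n. dist ((f ^^ n) zf) (x (int n)) \<le> \<eta>"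
        and zf_lim: "(\<lambda>n. dist ((f ^^ n) zf) (x (int n))) \<longlonglongrightarrow> 0"
        by blast
      have "\<exists>z\<in>X. (\<forall>n. dist ((g ^^ n) z) (x (- int n)) \<le> \<eta>) \<and> (\<lambda>n. dist ((g ^^ n) z) (x (- int n))) \<longlonglongrightarrow> 0"
      proof (rule \<delta>g[rule_format])
        show "x (- int n) \<in> X" for n
          using xX by simp
        have "limit_pseudo_orbit f \<sigma> x"
          using x by (rule limit_pseudo_orbit_mono) simp
        with xX show "dist (g (x (- int n))) (x (- int (Suc n))) \<le> \<delta>g" for n
          using back_small by blast
        from xX \<open>limit_pseudo_orbit f \<sigma> x\<close>
        show "(\<lambda>n. dist (g (x (- int n))) (x (- int (Suc n)))) \<longlonglongrightarrow> 0"
          by (rule back_lim)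
      qed
      then obtain zg where "zg \<in> X" and zg: "\<forall>n. dist ((g ^^ n) zg) (x (- int n)) \<le> \<eta>"
        and zg_lim: "(\<lambda>n. dist ((g ^^ n) zg) (x (- int n))) \<longlonglongrightarrow> 0"
        by blast
      have "dist zf zg \<le> dist zf (x 0) + dist zg (x 0)"
        by (rule dist_triangle2)
      also have "\<dots> < \<rho>"
        using zf[rule_format, of 0] zg[rule_format, of 0] \<open>\<rho> > 0\<close> by (simp add: \<eta>_def)
      finally obtain v where "v \<in> X" and vf: "v \<in> Vs X f (\<epsilon> / 2) zf" and vg: "v \<in> Vs X g (\<epsilon> / 2) zg"
        using \<rho> \<open>zf \<in> X\<close> \<open>zg \<in> X\<close> by (auto simp: Vu_eq_Vs Vs_def Ws_def)
      have "\<eta> + \<epsilon> / 2 \<le> \<epsilon>"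
        using \<open>\<epsilon> > 0\<close> by (simp add: \<eta>_def)
      with \<open>v \<in> X\<close> limit_shadows_glue[OF zf zf_lim zg zg_lim vf vg] show ?thesis
        by blast
    qed
    moreover have "min \<delta>f \<sigma> > 0"
      using \<open>\<delta>f > 0\<close> \<open>\<sigma> > 0\<close> by simp
    ultimately show "\<exists>\<delta>>0. \<forall>x. (\<forall>k. x k \<in> X) \<longrightarrow> limit_pseudo_orbit f \<delta> x \<longrightarrow>
        (\<exists>z\<in>X. limit_shadows f g \<epsilon> z x)"
      by blast
  qed
qed

end

theorem theoremD:
  fixes X :: "'a::metric_space set" and f g :: "'a \<Rightarrow> 'a"
  assumes "compact X" and "homeomorphism X X f g"
  shows "L_shadowing X f g \<longleftrightarrow>
           shadowing X f g \<and>
           (\<forall>\<epsilon>>0. \<exists>\<delta>>0. \<forall>x\<in>X. \<forall>y\<in>X. dist x y < \<delta> \<longrightarrow>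
               Vs X f \<epsilon> x \<inter> Vu X g \<epsilon> y \<noteq> {})"
proof -
  interpret compact_homeomorphism X f g
    using assms by unfold_locales
  show ?thesis
    unfolding local_product_structure_def[symmetric]
    using L_shadowing_imp_shadowing L_shadowing_imp_local_product_structure
      shadowing_local_product_imp_L_shadowing
    by blast
qed

end
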